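(* In the D-RR setting under the strongly convex assumptions, fix an epoch $t$ and suppose $\alpha_t\le \frac{1}{2L}$. Then for every $\ell\in\{0,\dots,m-1\}$, $$\mathbb{E}\|\bar x_t^{\ell+1}-\bar x_*^{\ell+1}\|^2\le\Big(1-\frac{\alpha_t\mu}{2}\Big)\mathbb{E}\|\bar x_t^{\ell}-\bar x_*^{\ell}\|^2+2\alpha_t\sigma^2_{\mathrm{shuffle}}+\frac{2\alpha_tL^2}{n}\Big(\frac1\mu+\alpha_t\Big)\mathbb{E}\|\mathbf{x}_t^\ell-\mathbf{1}(\bar x_t^\ell)^\intercal\|^2 .$$
   Context: D-RR setting. Let $n,m,p\ge1$ be integers and $[k]=\{1,\dots,k\}$. For $i\in[n]$, $\ell\in[m]$ let $f_{i,\ell}:\mathbb{R}^p\to\mathbb{R}$ be differentiable; $f_i:=\frac1m\sum_{\ell=1}^m f_{i,\ell}$, $f:=\frac1n\sum_{i=1}^n f_i$. Let $W=(w_{ij})\in\mathbb{R}^{n\times n}$ be nonnegative, symmetric, with $W\mathbf 1=\mathbf 1$ ($\mathbf 1$ the all-ones vector), compliant with an undirected connected graph on $[n]$ (for $i\ne j$, $w_{ij}>0$ iff $\{i,j\}$ is an edge); $\rho_w$ denotes the spectral norm of $W-\frac1n\mathbf 1\mathbf 1^\intercal$ (so $\rho_w<1$). The D-RR algorithm: given deterministic initial points $x_{i,0}\in\mathbb{R}^p$ and stepsizes $\alpha_t>0$, at each epoch $t=0,1,2,\dots$ each agent $i$ draws a permutation $(\pi^i_0,\dots,\pi^i_{m-1})$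 of $[m]$ uniformly at random, independently across agents and epochs; sets $x^0_{i,t}=x_{i,t}$; for $\ell=0,\dots,m-1$ sets $x^{\ell+1}_{i,t}=\sum_{j=1}^n w_{ij}\big(x^\ell_{j,t}-\alpha_t\nabla f_{j,\pi^j_\ell}(x^\ell_{j,t})\big)$; and sets $x_{i,t+1}=x^m_{i,t}$. Notation: $\mathbf{x}_t^\ell\in\mathbb{R}^{n\times p}$ has $i$-th row $(x^\ell_{i,t})^\intercal$; $\bar x_t^\ell=\frac1n\sum_i x^\ell_{i,t}$; $\mathbf 1(\bar x_t^\ell)^\intercal$ is the $n\times p$ matrix all of whose rows equal $(\bar x_t^\ell)^\intercal$; $\|\cdot\|$ is the Euclidean norm for vectors and the Frobenius norm for matrices; $\mathbb{E}$ is expectation over all random permutations. Strongly convex assumptions: each $f_{i,\ell}$ is $\mu$-strongly convex and has $L$-Lipschitz gradient ($0<\mu\le L$); $x^*$ is the unique minimizer of $f$. For epoch $t$ (with the permutations of that epoch) define $\bar x_*^\ell:=x^*-\alpha_t\sum_{k=0}^{\ell-1}\frac1n\sum_{i=1}^n\nabla f_{i,\pi^i_k}(x^* )$ for $\ell=0,\dots,m$ (so $\bar x_*^0=\bar x_*^m=x^*$), $\bar s_\ell:=\frac1n\sum_{i=1}^n f_{i,\pi^i_\ell}$, and the shuffling variance $\sigma^2_{\mathrm{shuffle}}:=\max_{\ell=0,\dots,m-1}\mathbb{E}\big[\bar s_\ell(\bar x_*^\ell)-\bar s_\ell(x^* )-\langle\nabla\bar s_\ell(x^* ),\bar x_*^\ell-x^*\rangle\big]$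 (which depends on $\alpha_t$). *)

theory Defs
  imports "HOL-Analysis.Analysis" "HOL-Combinatorics.Permutations" "HOL-Probability.Probability"
begin

definition strongly_convex :: "real \<Rightarrow> ('a::real_inner \<Rightarrow> real) \<Rightarrow> bool" where
  "strongly_convex \<mu> g \<longleftrightarrow> convex_on UNIV (\<lambda>x. g x - \<mu> / 2 * (norm x)\<^sup>2)"

definition support_connected :: "nat \<Rightarrow> (nat \<Rightarrow> nat \<Rightarrow> real) \<Rightarrow> bool" where
  "support_connected n w \<longleftrightarrow>
     (\<forall>i<n. \<forall>j<n. (\<lambda>a b. a < n \<and> b < n \<and> a \<noteq> b \<and> w a b > 0)\<^sup>*\<^sup>* i j)"

text \<open>One epoch of D-RR: inner iterates. Agents are 0..n-1, samples 0..m-1.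
  sig e i is the permutation drawn by agent i at epoch e; G i l is the gradient of f_{i,l}.\<close>
fun drr_inner :: "nat \<Rightarrow> (nat \<Rightarrow> nat \<Rightarrow> real) \<Rightarrow> (nat \<Rightarrow> nat \<Rightarrow> 'a::real_vector \<Rightarrow> 'a)
   \<Rightarrow> real \<Rightarrow> (nat \<Rightarrow> nat \<Rightarrow> nat) \<Rightarrow> (nat \<Rightarrow> 'a) \<Rightarrow> nat \<Rightarrow> (nat \<Rightarrow> 'a)" where
  "drr_inner n w G a pe X0 0 = X0"
| "drr_inner n w G a pe X0 (Suc l) =
     (\<lambda>i. \<Sum>j<n. w i j *\<^sub>R (drr_inner n w G a pe X0 l j - a *\<^sub>R G j (pe j l) (drr_inner n w G a pe X0 l j)))"

fun drr_outer :: "nat \<Rightarrow> nat \<Rightarrow> (nat \<Rightarrow> nat \<Rightarrow> real) \<Rightarrow> (nat \<Rightarrow> nat \<Rightarrow> 'a::real_vector \<Rightarrow> 'a)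
   \<Rightarrow> (nat \<Rightarrow> real) \<Rightarrow> (nat \<Rightarrow> 'a) \<Rightarrow> (nat \<Rightarrow> nat \<Rightarrow> nat \<Rightarrow> nat) \<Rightarrow> nat \<Rightarrow> (nat \<Rightarrow> 'a)" where
  "drr_outer n m w G \<alpha> x0 sig 0 = x0"
| "drr_outer n m w G \<alpha> x0 sig (Suc e) =
     drr_inner n w G (\<alpha> e) (sig e) (drr_outer n m w G \<alpha> x0 sig e) m"

definition drr_x :: "nat \<Rightarrow> nat \<Rightarrow> (nat \<Rightarrow> nat \<Rightarrow> real) \<Rightarrow> (nat \<Rightarrow> nat \<Rightarrow> 'a::real_vector \<Rightarrow> 'a)
   \<Rightarrow> (nat \<Rightarrow> real) \<Rightarrow> (nat \<Rightarrow> 'a) \<Rightarrow> (nat \<Rightarrow> nat \<Rightarrow> nat \<Rightarrow> nat) \<Rightarrow> nat \<Rightarrow> nat \<Rightarrow> nat \<Rightarrow> 'a" where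
  "drr_x n m w G \<alpha> x0 sig e l i =
     drr_inner n w G (\<alpha> e) (sig e) (drr_outer n m w G \<alpha> x0 sig e) l i"

text \<open>The uniform distribution on this finite
  set is the product of independent uniform permutations.\<close>
definition perm_space :: "nat \<Rightarrow> nat \<Rightarrow> nat \<Rightarrow> (nat \<Rightarrow> nat \<Rightarrow> nat \<Rightarrow> nat) set" where
  "perm_space n m t = {sig. (\<forall>e\<le>t. \<forall>i<n. sig e i permutes {..<m}) \<and>
                            (\<forall>e i. (t < e \<or> n \<le> i) \<longrightarrow> sig e i = id)}"

definition perm_pmf :: "nat \<Rightarrow> nat \<Rightarrow> nat \<Rightarrow> (nat \<Rightarrow> nat \<Rightarrow> nat \<Rightarrow> nat) pmf" where
  "perm_pmf n m t = pmf_of_set (perm_space n m t)"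

definition avg :: "nat \<Rightarrow> (nat \<Rightarrow> 'a::real_vector) \<Rightarrow> 'a" where
  "avg n X = (1 / real n) *\<^sub>R (\<Sum>i<n. X i)"

definition xstar_seq :: "nat \<Rightarrow> (nat \<Rightarrow> nat \<Rightarrow> 'a::real_vector \<Rightarrow> 'a) \<Rightarrow> real \<Rightarrow> 'a
   \<Rightarrow> (nat \<Rightarrow> nat \<Rightarrow> nat) \<Rightarrow> nat \<Rightarrow> 'a" where
  "xstar_seq n G a xs pe l = xs - a *\<^sub>R (\<Sum>k<l. avg n (\<lambda>i. G i (pe i k) xs))"

definition breg :: "nat \<Rightarrow> (nat \<Rightarrow> nat \<Rightarrow> 'a::real_inner \<Rightarrow> real) \<Rightarrow> (nat \<Rightarrow> nat \<Rightarrow> 'a \<Rightarrow> 'a)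
   \<Rightarrow> real \<Rightarrow> 'a \<Rightarrow> (nat \<Rightarrow> nat \<Rightarrow> nat) \<Rightarrow> nat \<Rightarrow> real" where
  "breg n f G a xs pe l =
    (let sbar = (\<lambda>y. (1 / real n) * (\<Sum>i<n. f i (pe i l) y));
         gbar = avg n (\<lambda>i. G i (pe i l) xs);
         z = xstar_seq n G a xs pe l
     in sbar z - sbar xs - inner gbar (z - xs))"

definition sigma_shuffle :: "nat \<Rightarrow> nat \<Rightarrow> (nat \<Rightarrow> nat \<Rightarrow> 'a::real_inner \<Rightarrow> real) \<Rightarrow> (nat \<Rightarrow> nat \<Rightarrow> 'a \<Rightarrow> 'a)
   \<Rightarrow> (nat \<Rightarrow> real) \<Rightarrow> 'a \<Rightarrow> nat \<Rightarrow> real" where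
  "sigma_shuffle n m f G \<alpha> xs t =
     Max ((\<lambda>l. measure_pmf.expectation (perm_pmf n m t) (\<lambda>sig. breg n f G (\<alpha> t) xs (sig t) l)) ` {..<m})"

end

theory Submission
  imports Defs
begin

text \<open>
  Let y be the averaged iterate and z the shuffled reference point. Since W is doubly
  stochastic, an inner step moves y by -\<alpha> times the average of the local gradients at the
  agents' iterates, and z by -\<alpha> times the average of the same gradients at x*. Split the
  difference of these averages into H, the gradients at y minus those at x*, and the
  consensus error e. Strong convexity and co-coercivity of each component bound the inner
  product of H with y - z from below by \<mu>/2 |y - z|^2, a multiple of |H|^2 and the Bregman
  term defining the shuffling variance; Young's inequality absorbs the cross terms,
  \<alpha> \<le> 1/(2L) absorbs |H|^2, and Lipschitz continuity of the gradients bounds |e|^2 by the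
  consensus error. Averaging this pathwise inequality over the permutations gives the claim.
\<close>

definition bregman :: "('a::real_inner \<Rightarrow> real) \<Rightarrow> ('a \<Rightarrow> 'a) \<Rightarrow> 'a \<Rightarrow> 'a \<Rightarrow> real" where
  "bregman F g v u = F v - F u - inner (g u) (v - u)"

lemma strongly_convex_bregman_ge:
  fixes F :: "'a::real_inner \<Rightarrow> real"
  assumes sc: "strongly_convex \<mu> F"
    and dF: "\<And>x. (F has_derivative (\<lambda>h. inner (g x) h)) (at x)"
  shows "\<mu> / 2 * (norm (v - u))\<^sup>2 \<le> bregman F g v u"
proof -
  define d where "d = v - u"
  define \<phi> where "\<phi> t = F (u + t *\<^sub>R d) - \<mu> / 2 * inner (u + t *\<^sub>R d) (u + t *\<^sub>R d)" for t :: real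
  have cvx: "convex_on UNIV (\<lambda>x. F x - \<mu> / 2 * (norm x)\<^sup>2)"
    using sc by (simp add: strongly_convex_def)
  have \<phi>_eq: "\<phi> t = F (u + t *\<^sub>R d) - \<mu> / 2 * (norm (u + t *\<^sub>R d))\<^sup>2" for t
    by (simp add: \<phi>_def power2_norm_eq_inner)
  have "convex_on UNIV \<phi>"
  proof (rule convex_onI)
    fix s a b :: real
    assume s: "0 < s" "s < 1"
    have "u + ((1 - s) *\<^sub>R a + s *\<^sub>R b) *\<^sub>R d = (1 - s) *\<^sub>R (u + a *\<^sub>R d) + s *\<^sub>R (u + b *\<^sub>R d)"
      by (simp add: algebra_simps)
    then show "\<phi> ((1 - s) *\<^sub>R a + s *\<^sub>R b) \<le> (1 - s) * \<phi> a + s * \<phi> b"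
      unfolding \<phi>_eq using convex_onD[OF cvx, of s "u + a *\<^sub>R d" "u + b *\<^sub>R d"] s by simp
  qed simp
  moreover have "(\<phi> has_field_derivative (inner (g u) d - \<mu> * inner u d)) (at 0)"
  proof -
    have line: "((\<lambda>t::real. u + t *\<^sub>R d) has_derivative (\<lambda>s. s *\<^sub>R d)) (at 0)"
      by (auto intro!: derivative_eq_intros)
    have "((\<lambda>t. F (u + t *\<^sub>R d)) has_derivative (\<lambda>s. inner (g u) (s *\<^sub>R d))) (at 0)"
      using has_derivative_compose[OF line, of F "\<lambda>h. inner (g (u + 0 *\<^sub>R d)) h"] dF by simp
    then have "(\<phi> has_derivative (\<lambda>s. inner (g u) (s *\<^sub>R d) - \<mu> / 2 * (2 * s * inner u d))) (at 0)"
      unfolding \<phi>_def by (auto intro!: derivative_eq_intros simp: inner_commute)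
    then show ?thesis
      unfolding has_field_derivative_def by (rule has_derivative_eq_rhs) (auto simp: algebra_simps)
  qed
  ultimately have "(inner (g u) d - \<mu> * inner u d) * (1 - 0) \<le> \<phi> 1 - \<phi> 0"
    by (intro convex_on_imp_above_tangent) auto
  moreover have "\<phi> 1 = F v - \<mu> / 2 * inner v v" "\<phi> 0 = F u - \<mu> / 2 * inner u u"
    by (simp_all add: \<phi>_def d_def)
  moreover have "inner v v = inner u u + 2 * inner u d + inner d d"
    by (simp add: d_def algebra_simps inner_commute)
  ultimately show ?thesis
    by (simp add: bregman_def d_def[symmetric] power2_norm_eq_inner algebra_simps)
qed

lemma lipschitz_gradient_bregman_le:
  fixes F :: "'a::real_inner \<Rightarrow> real"
  assumes dF: "\<And>x. (F has_derivative (\<lambda>h. inner (g x) h)) (at x)"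
    and lip: "\<And>x y. norm (g x - g y) \<le> L * norm (x - y)"
  shows "bregman F g v u \<le> L / 2 * (norm (v - u))\<^sup>2"
proof -
  define d where "d = v - u"
  define \<psi> where "\<psi> t = F (u + t *\<^sub>R d) - t * inner (g u) d - L / 2 * t\<^sup>2 * inner d d" for t :: real
  define \<psi>' where "\<psi>' t = inner (g (u + t *\<^sub>R d) - g u) d - L * t * inner d d" for t :: real
  have "DERIV \<psi> t :> \<psi>' t" for t
  proof -
    have line: "((\<lambda>t::real. u + t *\<^sub>R d) has_derivative (\<lambda>s. s *\<^sub>R d)) (at t)"
      by (auto intro!: derivative_eq_intros)
    have "((\<lambda>t. F (u + t *\<^sub>R d)) has_derivative (\<lambda>s. inner (g (u + t *\<^sub>R d)) (s *\<^sub>R d))) (at t)"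
      using has_derivative_compose[OF line, of F "\<lambda>h. inner (g (u + t *\<^sub>R d)) h"] dF by simp
    then have "(\<psi> has_derivative
        (\<lambda>s. inner (g (u + t *\<^sub>R d)) (s *\<^sub>R d) - s * inner (g u) d - L / 2 * (2 * t * s) * inner d d)) (at t)"
      unfolding \<psi>_def by (auto intro!: derivative_eq_intros)
    then show ?thesis
      unfolding has_field_derivative_def \<psi>'_def
      by (rule has_derivative_eq_rhs) (auto simp: algebra_simps inner_diff_left)
  qed
  then obtain z where z: "0 < z" "z < 1" "\<psi> 1 - \<psi> 0 = (1 - 0) * \<psi>' z"
    using MVT2[of 0 1 \<psi> \<psi>'] by auto
  have "inner (g (u + z *\<^sub>R d) - g u) d \<le> norm (g (u + z *\<^sub>R d) - g u) * norm d"
    by (rule norm_cauchy_schwarz)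
  also have "\<dots> \<le> (L * (z * norm d)) * norm d"
    using lip[of "u + z *\<^sub>R d" u] z by (intro mult_right_mono) auto
  also have "\<dots> = L * z * inner d d"
    by (simp add: power2_norm_eq_inner[symmetric] power2_eq_square)
  finally have "\<psi> 1 \<le> \<psi> 0"
    using z by (simp add: \<psi>'_def)
  then show ?thesis
    by (simp add: bregman_def \<psi>_def d_def power2_norm_eq_inner)
qed

lemma cocoercive_bregman_ge:
  fixes F :: "'a::real_inner \<Rightarrow> real"
  assumes dF: "\<And>x. (F has_derivative (\<lambda>h. inner (g x) h)) (at x)"
    and lip: "\<And>x y. norm (g x - g y) \<le> L * norm (x - y)"
    and convex: "\<And>x y. 0 \<le> bregman F g y x"
    and L: "0 < L"
  shows "1 / (2 * L) * (norm (g v - g u))\<^sup>2 \<le> bregman F g v u"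
proof -
  define dd where "dd = g v - g u"
  \<comment> \<open>compare \<open>F\<close> at \<open>v\<close> and \<open>u\<close> through the gradient step \<open>w\<close> taken from \<open>v\<close>\<close>
  define w where "w = v - (1 / L) *\<^sub>R dd"
  have upper: "bregman F g w v \<le> L / 2 * (norm (w - v))\<^sup>2"
    by (rule lipschitz_gradient_bregman_le[OF dF lip])
  have lower: "0 \<le> bregman F g w u"
    by (rule convex)
  have "(norm (w - v))\<^sup>2 = (1 / L)\<^sup>2 * inner dd dd"
    using L by (simp add: w_def power_divide power2_norm_eq_inner[symmetric])
  moreover have "inner (g v) dd - inner (g u) dd = inner dd dd"
    by (simp add: dd_def inner_diff_left)
  moreover have "(1 / L) * inner dd dd - L / 2 * ((1 / L)\<^sup>2 * inner dd dd) = 1 / (2 * L) * inner dd dd"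
    using L by (simp add: field_simps power2_eq_square)
  ultimately show ?thesis
    using upper lower
    by (simp add: bregman_def w_def inner_diff_right dd_def[symmetric] power2_norm_eq_inner algebra_simps)
qed

lemma gradient_difference_inner_ge:
  fixes F :: "'a::real_inner \<Rightarrow> real"
  assumes sc: "strongly_convex \<mu> F"
    and dF: "\<And>x. (F has_derivative (\<lambda>h. inner (g x) h)) (at x)"
    and lip: "\<And>x y. norm (g x - g y) \<le> L * norm (x - y)"
    and \<mu>: "0 \<le> \<mu>" and L: "0 < L"
  shows "\<mu> / 2 * (norm (y - z))\<^sup>2 + 1 / (2 * L) * (norm (g y - g x))\<^sup>2 - bregman F g z x
           \<le> inner (g y - g x) (y - z)"
proof -
  have convex: "0 \<le> bregman F g v u" for u v
    using strongly_convex_bregman_ge[OF sc dF, of v u] \<mu>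
    by (meson mult_nonneg_nonneg order_trans zero_le_divide_iff zero_le_numeral zero_le_power2)
  have "\<mu> / 2 * (norm (y - z))\<^sup>2 \<le> bregman F g z y"
    using strongly_convex_bregman_ge[OF sc dF, of z y] by (simp add: norm_minus_commute)
  moreover have "1 / (2 * L) * (norm (g y - g x))\<^sup>2 \<le> bregman F g y x"
    by (rule cocoercive_bregman_ge[OF dF lip convex L])
  moreover have "inner (g y - g x) (y - z) = bregman F g z y + bregman F g y x - bregman F g z x"
    by (simp add: bregman_def inner_diff_left inner_diff_right algebra_simps)
  ultimately show ?thesis
    by linarith
qed

lemma norm_gradient_step_sq_le:
  fixes r H e :: "'a::real_inner"
  assumes a: "0 \<le> a" and \<mu>: "0 < \<mu>"
  shows "(norm (r - a *\<^sub>R H - a *\<^sub>R e))\<^sup>2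
           \<le> (1 + a * \<mu> / 2) * (norm r)\<^sup>2 - 2 * a * inner r H + 2 * a\<^sup>2 * (norm H)\<^sup>2
             + (2 * a / \<mu> + 2 * a\<^sup>2) * (norm e)\<^sup>2"
proof -
  have expand: "(norm (r - a *\<^sub>R H - a *\<^sub>R e))\<^sup>2 = (norm r)\<^sup>2 - 2 * a * inner r H - 2 * a * inner r e
      + a\<^sup>2 * (norm H)\<^sup>2 + 2 * a\<^sup>2 * inner H e + a\<^sup>2 * (norm e)\<^sup>2"
    unfolding power2_norm_eq_inner
    by (simp add: inner_diff_left inner_diff_right inner_commute power2_eq_square algebra_simps)
  have "0 \<le> (2 * a / \<mu>) * (norm ((\<mu> / 2) *\<^sub>R r + e))\<^sup>2"
    using a \<mu> by simp
  also have "\<dots> = a * \<mu> / 2 * (norm r)\<^sup>2 + 2 * a * inner r e + 2 * a / \<mu> * (norm e)\<^sup>2"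
    using \<mu> unfolding power2_norm_eq_inner
    by (simp add: inner_add_left inner_add_right inner_commute field_simps power2_eq_square)
  finally have young_re: "- 2 * a * inner r e \<le> a * \<mu> / 2 * (norm r)\<^sup>2 + 2 * a / \<mu> * (norm e)\<^sup>2"
    by linarith
  have "0 \<le> a\<^sup>2 * (norm (H - e))\<^sup>2"
    by simp
  also have "\<dots> = a\<^sup>2 * (norm H)\<^sup>2 - 2 * a\<^sup>2 * inner H e + a\<^sup>2 * (norm e)\<^sup>2"
    unfolding power2_norm_eq_inner
    by (simp add: inner_diff_left inner_diff_right inner_commute algebra_simps)
  finally have young_He: "2 * a\<^sup>2 * inner H e \<le> a\<^sup>2 * (norm H)\<^sup>2 + a\<^sup>2 * (norm e)\<^sup>2"
    by linarith
  show ?thesis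
    using expand young_re young_He by (simp add: algebra_simps)
qed

lemma avg_diff: "avg n (\<lambda>i. p i - q i) = avg n p - avg n (q :: nat \<Rightarrow> 'a::real_vector)"
  by (simp add: avg_def sum_subtractf scaleR_diff_right)

lemma avg_scaleR: "avg n (\<lambda>i. c *\<^sub>R p i) = c *\<^sub>R avg n (p :: nat \<Rightarrow> 'a::real_vector)"
  by (simp add: avg_def scaleR_sum_right)

lemma inner_avg_left: "inner (avg n v) r = (1 / real n) * (\<Sum>i<n. inner (v i) r)"
  by (simp add: avg_def inner_sum_left)

lemma norm_avg_sq_le:
  fixes v :: "nat \<Rightarrow> 'a::real_normed_vector"
  assumes n: "n \<ge> 1"
  shows "(norm (avg n v))\<^sup>2 \<le> (1 / real n) * (\<Sum>i<n. (norm (v i))\<^sup>2)"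
proof -
  have "(norm (\<Sum>i<n. v i))\<^sup>2 \<le> (\<Sum>i<n. norm (v i))\<^sup>2"
    using norm_sum by (intro power_mono) auto
  also have "\<dots> \<le> (\<Sum>i<n. (norm (v i))\<^sup>2) * real n"
    using sum_squared_le_sum_of_squares[of "\<lambda>i. norm (v i)" "{..<n}"] by simp
  finally have "(1 / real n)\<^sup>2 * (norm (\<Sum>i<n. v i))\<^sup>2 \<le> (1 / real n)\<^sup>2 * ((\<Sum>i<n. (norm (v i))\<^sup>2) * real n)"
    by (intro mult_left_mono) auto
  then show ?thesis
    using n by (simp add: avg_def power_divide power2_eq_square field_simps)
qed

lemma avg_doubly_stochastic:
  fixes v :: "nat \<Rightarrow> 'a::real_vector"
  assumes w_sym: "\<And>i j. i < n \<Longrightarrow> j < n \<Longrightarrow> w i j = w j i"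
    and w_stoch: "\<And>i. i < n \<Longrightarrow> (\<Sum>j<n. w i j) = 1"
  shows "avg n (\<lambda>i. \<Sum>j<n. w i j *\<^sub>R v j) = avg n v"
proof -
  have "(\<Sum>i<n. \<Sum>j<n. w i j *\<^sub>R v j) = (\<Sum>j<n. (\<Sum>i<n. w i j) *\<^sub>R v j)"
    by (subst sum.swap) (simp add: scaleR_sum_left)
  also have "\<dots> = (\<Sum>j<n. v j)"
  proof (rule sum.cong)
    fix j
    assume j: "j \<in> {..<n}"
    have "(\<Sum>i<n. w i j) = (\<Sum>i<n. w j i)"
      using w_sym j by (intro sum.cong) auto
    then show "(\<Sum>i<n. w i j) *\<^sub>R v j = v j"
      using w_stoch j by simp
  qed simp
  finally show ?thesis
    by (simp add: avg_def)
qed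

lemma avg_gradient_difference_inner_ge:
  fixes F :: "nat \<Rightarrow> 'a::real_inner \<Rightarrow> real" and g :: "nat \<Rightarrow> 'a \<Rightarrow> 'a"
  assumes n: "n \<ge> 1"
    and dF: "\<And>i x. i < n \<Longrightarrow> (F i has_derivative (\<lambda>h. inner (g i x) h)) (at x)"
    and sc: "\<And>i. i < n \<Longrightarrow> strongly_convex \<mu> (F i)"
    and lip: "\<And>i x y. i < n \<Longrightarrow> norm (g i x - g i y) \<le> L * norm (x - y)"
    and \<mu>: "0 \<le> \<mu>" and L: "0 < L"
  shows "\<mu> / 2 * (norm (y - z))\<^sup>2 + 1 / (2 * L) * ((1 / real n) * (\<Sum>i<n. (norm (g i y - g i x))\<^sup>2))
           - (1 / real n) * (\<Sum>i<n. bregman (F i) (g i) z x)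
         \<le> inner (avg n (\<lambda>i. g i y - g i x)) (y - z)"
proof -
  have sum_eq: "(\<Sum>i<n. \<mu> / 2 * (norm (y - z))\<^sup>2 + 1 / (2 * L) * (norm (g i y - g i x))\<^sup>2
           - bregman (F i) (g i) z x)
        = real n * (\<mu> / 2 * (norm (y - z))\<^sup>2) + 1 / (2 * L) * (\<Sum>i<n. (norm (g i y - g i x))\<^sup>2)
          - (\<Sum>i<n. bregman (F i) (g i) z x)"
    by (simp add: sum.distrib sum_subtractf sum_distrib_left)
  have "\<mu> / 2 * (norm (y - z))\<^sup>2 + 1 / (2 * L) * ((1 / real n) * (\<Sum>i<n. (norm (g i y - g i x))\<^sup>2))
               - (1 / real n) * (\<Sum>i<n. bregman (F i) (g i) z x)
             = (1 / real n) * (\<Sum>i<n. \<mu> / 2 * (norm (y - z))\<^sup>2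
                 + 1 / (2 * L) * (norm (g i y - g i x))\<^sup>2 - bregman (F i) (g i) z x)"
    unfolding sum_eq using n by (simp add: field_simps)
  also have "\<dots> \<le> (1 / real n) * (\<Sum>i<n. inner (g i y - g i x) (y - z))"
    using gradient_difference_inner_ge[OF sc dF lip \<mu> L] by (intro mult_left_mono sum_mono) auto
  also have "\<dots> = inner (avg n (\<lambda>i. g i y - g i x)) (y - z)"
    by (simp add: inner_avg_left)
  finally show ?thesis .
qed

lemma norm_avg_lipschitz_diff_sq_le:
  fixes g :: "nat \<Rightarrow> 'a::real_normed_vector \<Rightarrow> 'b::real_normed_vector"
  assumes n: "n \<ge> 1"
    and lip: "\<And>i x y. i < n \<Longrightarrow> norm (g i x - g i y) \<le> L * norm (x - y)"
  shows "(norm (avg n (\<lambda>i. g i (x i) - g i y)))\<^sup>2 \<le> L\<^sup>2 / real n * (\<Sum>i<n. (norm (x i - y))\<^sup>2)"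
proof -
  have "(norm (avg n (\<lambda>i. g i (x i) - g i y)))\<^sup>2 \<le> (1 / real n) * (\<Sum>i<n. (norm (g i (x i) - g i y))\<^sup>2)"
    by (rule norm_avg_sq_le[OF n])
  also have "\<dots> \<le> (1 / real n) * (\<Sum>i<n. (L * norm (x i - y))\<^sup>2)"
    using lip by (intro mult_left_mono sum_mono power_mono) auto
  finally show ?thesis
    by (simp add: power_mult_distrib sum_distrib_left)
qed

lemma averaged_gradient_step_bound:
  fixes F :: "nat \<Rightarrow> 'a::real_inner \<Rightarrow> real" and g :: "nat \<Rightarrow> 'a \<Rightarrow> 'a" and x :: "nat \<Rightarrow> 'a"
  assumes n: "n \<ge> 1"
    and dF: "\<And>i x. i < n \<Longrightarrow> (F i has_derivative (\<lambda>h. inner (g i x) h)) (at x)"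
    and sc: "\<And>i. i < n \<Longrightarrow> strongly_convex \<mu> (F i)"
    and lip: "\<And>i x y. i < n \<Longrightarrow> norm (g i x - g i y) \<le> L * norm (x - y)"
    and \<mu>: "0 < \<mu>" "\<mu> \<le> L" and a: "0 < a" "a \<le> 1 / (2 * L)"
  shows "(norm ((avg n x - a *\<^sub>R avg n (\<lambda>i. g i (x i))) - (z - a *\<^sub>R avg n (\<lambda>i. g i xs))))\<^sup>2
     \<le> (1 - a * \<mu> / 2) * (norm (avg n x - z))\<^sup>2
       + 2 * a * ((1 / real n) * (\<Sum>i<n. bregman (F i) (g i) z xs))
       + 2 * a * L\<^sup>2 / real n * (1 / \<mu> + a) * (\<Sum>i<n. (norm (x i - avg n x))\<^sup>2)"
proof -
  define y where "y = avg n x"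
  define r where "r = y - z"
  define H where "H = avg n (\<lambda>i. g i y - g i xs)"
  define e where "e = avg n (\<lambda>i. g i (x i) - g i y)"
  define D where "D = (1 / real n) * (\<Sum>i<n. bregman (F i) (g i) z xs)"
  define Q where "Q = (1 / real n) * (\<Sum>i<n. (norm (g i y - g i xs))\<^sup>2)"
  define C where "C = (\<Sum>i<n. (norm (x i - y))\<^sup>2)"
  have L: "0 < L"
    using \<mu> by linarith
  have step: "(avg n x - a *\<^sub>R avg n (\<lambda>i. g i (x i))) - (z - a *\<^sub>R avg n (\<lambda>i. g i xs))
               = r - a *\<^sub>R H - a *\<^sub>R e"
  proof -
    have "avg n (\<lambda>i. g i (x i)) - avg n (\<lambda>i. g i xs) = H + e"
      by (simp add: H_def e_def avg_diff)
    then show ?thesis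
      by (simp add: r_def y_def algebra_simps flip: scaleR_diff_right)
  qed
  have "a * (\<mu> / 2 * (norm r)\<^sup>2 + 1 / (2 * L) * Q - D) \<le> a * inner r H"
    using avg_gradient_difference_inner_ge[OF n dF sc lip _ L, where y = y and x = xs and z = z] \<mu> a
    by (intro mult_left_mono) (auto simp: r_def H_def Q_def D_def inner_commute)
  moreover have "2 * a\<^sup>2 * (norm H)\<^sup>2 \<le> a / L * Q"
  proof -
    have "2 * a\<^sup>2 * (norm H)\<^sup>2 \<le> 2 * a\<^sup>2 * Q"
      unfolding H_def Q_def by (intro mult_left_mono norm_avg_sq_le[OF n]) auto
    also have "\<dots> \<le> a / L * Q"
      using a L by (intro mult_right_mono) (auto simp: Q_def field_simps power2_eq_square sum_nonneg)
    finally show ?thesis .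
  qed
  moreover have "(2 * a / \<mu> + 2 * a\<^sup>2) * (norm e)\<^sup>2 \<le> (2 * a / \<mu> + 2 * a\<^sup>2) * (L\<^sup>2 / real n * C)"
    unfolding e_def C_def using a \<mu> by (intro mult_left_mono norm_avg_lipschitz_diff_sq_le[OF n lip]) auto
  ultimately have "(norm (r - a *\<^sub>R H - a *\<^sub>R e))\<^sup>2
               \<le> (1 - a * \<mu> / 2) * (norm r)\<^sup>2 + 2 * a * D + (2 * a / \<mu> + 2 * a\<^sup>2) * (L\<^sup>2 / real n * C)"
    using norm_gradient_step_sq_le[of a \<mu> r H e] a \<mu> L by (simp add: algebra_simps)
  also have "(2 * a / \<mu> + 2 * a\<^sup>2) * (L\<^sup>2 / real n * C) = 2 * a * L\<^sup>2 / real n * (1 / \<mu> + a) * C"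
    using \<mu> by (simp add: field_simps power2_eq_square)
  finally show ?thesis
    unfolding step by (simp add: y_def r_def C_def D_def)
qed

lemma avg_drr_inner_Suc:
  assumes w_sym: "\<And>i j. i < n \<Longrightarrow> j < n \<Longrightarrow> w i j = w j i"
    and w_stoch: "\<And>i. i < n \<Longrightarrow> (\<Sum>j<n. w i j) = 1"
  shows "avg n (drr_inner n w G a pe X0 (Suc l))
           = avg n (drr_inner n w G a pe X0 l)
             - a *\<^sub>R avg n (\<lambda>i. G i (pe i l) (drr_inner n w G a pe X0 l i))"
  by (simp add: avg_doubly_stochastic[OF w_sym w_stoch] avg_diff avg_scaleR)

lemma xstar_seq_Suc:
  "xstar_seq n G a xs pe (Suc l) = xstar_seq n G a xs pe l - a *\<^sub>R avg n (\<lambda>i. G i (pe i l) xs)"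
  by (simp add: xstar_seq_def algebra_simps)

lemma breg_eq_avg_bregman:
  "breg n f G a xs pe l
     = (1 / real n) * (\<Sum>i<n. bregman (f i (pe i l)) (G i (pe i l)) (xstar_seq n G a xs pe l) xs)"
  by (simp add: breg_def bregman_def Let_def inner_avg_left sum_subtractf right_diff_distrib)

lemma perm_space_finite: "finite (perm_space n m t)"
proof -
  define restr where "restr sig = restrict (\<lambda>(e, i). sig e i) ({..t} \<times> {..<n})"
    for sig :: "nat \<Rightarrow> nat \<Rightarrow> nat \<Rightarrow> nat"
  have "restr ` perm_space n m t \<subseteq> PiE ({..t} \<times> {..<n}) (\<lambda>_. {p. p permutes {..<m}})"
    by (auto simp: restr_def perm_space_def)
  moreover have "finite (PiE ({..t} \<times> {..<n}) (\<lambda>_. {p. p permutes {..<m}}))"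
    by (intro finite_PiE) (auto intro: finite_permutations)
  moreover have "inj_on restr (perm_space n m t)"
  proof (rule inj_onI, intro ext)
    fix s1 s2 e i k
    assume s: "s1 \<in> perm_space n m t" "s2 \<in> perm_space n m t" and eq: "restr s1 = restr s2"
    show "s1 e i k = s2 e i k"
    proof (cases "e \<le> t \<and> i < n")
      case True
      then show ?thesis
        using fun_cong[OF eq, of "(e, i)"] by (simp add: restr_def)
    next
      case False
      then show ?thesis
        using s by (auto simp: perm_space_def not_le)
    qed
  qed
  ultimately show ?thesis
    by (meson finite_image_iff finite_subset)
qed

lemma perm_space_nonempty: "perm_space n m t \<noteq> {}"
proof -
  have "(\<lambda>e i. id) \<in> perm_space n m t"
    by (simp add: perm_space_def permutes_id)
  then show ?thesis
    by blast
qed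

lemma perm_space_less:
  assumes "sig \<in> perm_space n m t" "i < n" "l < m"
  shows "sig t i l < m"
  using assms permutes_in_image[of "sig t i" "{..<m}" l] by (simp add: perm_space_def)

lemma expectation_pmf_of_set_le_combination:
  fixes P A B C :: "'a \<Rightarrow> real"
  assumes "finite S" "S \<noteq> {}"
    and "\<And>s. s \<in> S \<Longrightarrow> P s \<le> c\<^sub>1 * A s + c\<^sub>2 * B s + c\<^sub>3 * C s"
  shows "measure_pmf.expectation (pmf_of_set S) P
           \<le> c\<^sub>1 * measure_pmf.expectation (pmf_of_set S) A + c\<^sub>2 * measure_pmf.expectation (pmf_of_set S) B
             + c\<^sub>3 * measure_pmf.expectation (pmf_of_set S) C"
proof -
  have int: "integrable (measure_pmf (pmf_of_set S)) h" for h :: "'a \<Rightarrow> real"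
    by (rule integrable_measure_pmf_finite) (use assms in simp)
  have "measure_pmf.expectation (pmf_of_set S) P
          \<le> measure_pmf.expectation (pmf_of_set S) (\<lambda>s. c\<^sub>1 * A s + c\<^sub>2 * B s + c\<^sub>3 * C s)"
    using assms by (intro integral_mono_AE int) (simp add: AE_measure_pmf_iff)
  then show ?thesis
    by (simp add: int)
qed

lemma drr_avg_step_bound:
  fixes f :: "nat \<Rightarrow> nat \<Rightarrow> 'a::real_inner \<Rightarrow> real" and G :: "nat \<Rightarrow> nat \<Rightarrow> 'a \<Rightarrow> 'a"
  assumes n: "n \<ge> 1" and sig: "sig \<in> perm_space n m t" and l: "l < m"
    and grad: "\<And>i l x. i < n \<Longrightarrow> l < m \<Longrightarrow> (f i l has_derivative (\<lambda>h. inner (G i l x) h)) (at x)"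
    and strong: "\<And>i l. i < n \<Longrightarrow> l < m \<Longrightarrow> strongly_convex \<mu> (f i l)"
    and lips: "\<And>i l x y. i < n \<Longrightarrow> l < m \<Longrightarrow> norm (G i l x - G i l y) \<le> L * norm (x - y)"
    and w_sym: "\<And>i j. i < n \<Longrightarrow> j < n \<Longrightarrow> w i j = w j i"
    and w_stoch: "\<And>i. i < n \<Longrightarrow> (\<Sum>j<n. w i j) = 1"
    and \<mu>: "0 < \<mu>" "\<mu> \<le> L" and \<alpha>: "0 < \<alpha> t" "\<alpha> t \<le> 1 / (2 * L)"
  shows "(norm (avg n (drr_x n m w G \<alpha> x0 sig t (Suc l)) - xstar_seq n G (\<alpha> t) xs (sig t) (Suc l)))\<^sup>2
    \<le> (1 - \<alpha> t * \<mu> / 2) * (norm (avg n (drr_x n m w G \<alpha> x0 sig t l) - xstar_seq n G (\<alpha> t) xs (sig t) l))\<^sup>2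
      + 2 * \<alpha> t * breg n f G (\<alpha> t) xs (sig t) l
      + 2 * \<alpha> t * L\<^sup>2 / real n * (1 / \<mu> + \<alpha> t) *
          (\<Sum>i<n. (norm (drr_x n m w G \<alpha> x0 sig t l i - avg n (drr_x n m w G \<alpha> x0 sig t l)))\<^sup>2)"
proof -
  define X where "X = drr_inner n w G (\<alpha> t) (sig t) (drr_outer n m w G \<alpha> x0 sig t) l"
  have x_l: "drr_x n m w G \<alpha> x0 sig t l = X"
    by (intro ext) (simp add: drr_x_def X_def)
  have "drr_x n m w G \<alpha> x0 sig t (Suc l)
          = drr_inner n w G (\<alpha> t) (sig t) (drr_outer n m w G \<alpha> x0 sig t) (Suc l)"
    by (intro ext) (simp only: drr_x_def)
  then have x_Suc: "avg n (drr_x n m w G \<alpha> x0 sig t (Suc l))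
                     = avg n X - \<alpha> t *\<^sub>R avg n (\<lambda>i. G i (sig t i l) (X i))"
    unfolding X_def by (simp only: avg_drr_inner_Suc[OF w_sym w_stoch])
  show ?thesis
    unfolding x_l x_Suc xstar_seq_Suc breg_eq_avg_bregman
    using averaged_gradient_step_bound[where F = "\<lambda>i. f i (sig t i l)" and g = "\<lambda>i. G i (sig t i l)"
        and a = "\<alpha> t" and z = "xstar_seq n G (\<alpha> t) xs (sig t) l" and x = X]
      n grad strong lips \<mu> \<alpha> perm_space_less[OF sig _ l]
    by simp
qed

theorem lemma5:
  fixes n m t :: nat
    and f :: "nat \<Rightarrow> nat \<Rightarrow> real^'p \<Rightarrow> real"
    and G :: "nat \<Rightarrow> nat \<Rightarrow> real^'p \<Rightarrow> real^'p"
    and w :: "nat \<Rightarrow> nat \<Rightarrow> real"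
    and \<alpha> :: "nat \<Rightarrow> real"
    and x0 :: "nat \<Rightarrow> real^'p"
    and xs :: "real^'p"
    and \<mu> L :: real
  assumes n_pos: "n \<ge> 1" and m_pos: "m \<ge> 1"
    and grad: "\<And>i l x. i < n \<Longrightarrow> l < m \<Longrightarrow> (f i l has_derivative (\<lambda>h. inner (G i l x) h)) (at x)"
    and mu_pos: "0 < \<mu>" and mu_le_L: "\<mu> \<le> L"
    and strong: "\<And>i l. i < n \<Longrightarrow> l < m \<Longrightarrow> strongly_convex \<mu> (f i l)"
    and lips: "\<And>i l x y. i < n \<Longrightarrow> l < m \<Longrightarrow> norm (G i l x - G i l y) \<le> L * norm (x - y)"
    and w_nonneg: "\<And>i j. i < n \<Longrightarrow> j < n \<Longrightarrow> 0 \<le> w i j"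
    and w_sym: "\<And>i j. i < n \<Longrightarrow> j < n \<Longrightarrow> w i j = w j i"
    and w_stoch: "\<And>i. i < n \<Longrightarrow> (\<Sum>j<n. w i j) = 1"
    and w_conn: "support_connected n w"
    and alpha_pos: "\<And>e. 0 < \<alpha> e"
    and xs_min: "\<And>x. (1 / real n) * (\<Sum>i<n. (1 / real m) * (\<Sum>l<m. f i l xs))
                     \<le> (1 / real n) * (\<Sum>i<n. (1 / real m) * (\<Sum>l<m. f i l x))"
    and alpha_le: "\<alpha> t \<le> 1 / (2 * L)"
    and l_lt: "l < m"
  shows "measure_pmf.expectation (perm_pmf n m t)
           (\<lambda>sig. (norm (avg n (drr_x n m w G \<alpha> x0 sig t (Suc l))
                          - xstar_seq n G (\<alpha> t) xs (sig t) (Suc l)))\<^sup>2)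
         \<le> (1 - \<alpha> t * \<mu> / 2) * measure_pmf.expectation (perm_pmf n m t)
              (\<lambda>sig. (norm (avg n (drr_x n m w G \<alpha> x0 sig t l)
                          - xstar_seq n G (\<alpha> t) xs (sig t) l))\<^sup>2)
           + 2 * \<alpha> t * sigma_shuffle n m f G \<alpha> xs t
           + 2 * \<alpha> t * L\<^sup>2 / real n * (1 / \<mu> + \<alpha> t) *
             measure_pmf.expectation (perm_pmf n m t)
              (\<lambda>sig. \<Sum>i<n. (norm (drr_x n m w G \<alpha> x0 sig t l i
                               - avg n (drr_x n m w G \<alpha> x0 sig t l)))\<^sup>2)"
proof -
  let ?E = "measure_pmf.expectation (perm_pmf n m t)"
  define P where "P sig = (norm (avg n (drr_x n m w G \<alpha> x0 sig t (Suc l))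
                          - xstar_seq n G (\<alpha> t) xs (sig t) (Suc l)))\<^sup>2" for sig
  define A where "A sig = (norm (avg n (drr_x n m w G \<alpha> x0 sig t l)
                          - xstar_seq n G (\<alpha> t) xs (sig t) l))\<^sup>2" for sig
  define B where "B sig = breg n f G (\<alpha> t) xs (sig t) l" for sig
  define C where "C sig = (\<Sum>i<n. (norm (drr_x n m w G \<alpha> x0 sig t l i
                               - avg n (drr_x n m w G \<alpha> x0 sig t l)))\<^sup>2)" for sig
  have pathwise: "P sig \<le> (1 - \<alpha> t * \<mu> / 2) * A sig + 2 * \<alpha> t * B sig
                         + 2 * \<alpha> t * L\<^sup>2 / real n * (1 / \<mu> + \<alpha> t) * C sig"
    if "sig \<in> perm_space n m t" for sig
    unfolding P_def A_def B_def C_def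
    using drr_avg_step_bound[where \<alpha> = \<alpha> and t = t, OF n_pos that l_lt grad strong lips w_sym w_stoch
        mu_pos mu_le_L alpha_pos alpha_le] .
  have "?E B \<le> sigma_shuffle n m f G \<alpha> xs t"
    unfolding sigma_shuffle_def B_def using l_lt by (intro Max_ge) auto
  then have "2 * \<alpha> t * ?E B \<le> 2 * \<alpha> t * sigma_shuffle n m f G \<alpha> xs t"
    using alpha_pos by (intro mult_left_mono) (auto simp: less_imp_le)
  moreover have "?E P \<le> (1 - \<alpha> t * \<mu> / 2) * ?E A + 2 * \<alpha> t * ?E B
                 + 2 * \<alpha> t * L\<^sup>2 / real n * (1 / \<mu> + \<alpha> t) * ?E C"
    unfolding perm_pmf_def
    using perm_space_finite perm_space_nonempty pathwise by (rule expectation_pmf_of_set_le_combination)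
  ultimately show ?thesis
    unfolding P_def A_def C_def by linarith
qed

end
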